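(* Let $(\mathfrak g,[\cdot,\cdot,\cdot])$ be a Lie triple system, $(V;\rho)$ a representation of $\mathfrak g$, and $T:V\to\mathfrak g$ a linear map. Let $\Theta$ be the semidirect product bracket on $\mathfrak g\oplus V$ and $\Theta^T$ its twisting by $T$. Then $((\mathfrak g\oplus V,\Theta^T),\mathfrak g,V)$ is a twilled Lie triple system (i.e. $\mathfrak g$ and $V$ are subalgebras for $\Theta^T$) if and only if $T$ is a relative Rota–Baxter operator on $\mathfrak g$ with respect to $(V;\rho)$.
   Context: All vector spaces are over a field of characteristic $0$. A Lie triple system is a vector space with a trilinear bracket satisfying $[x,x,y]=0$, $[x,y,z]+[y,z,x]+[z,x,y]=0$ and $[x,y,[z,w,t]]=[[x,y,z],w,t]+[z,[x,y,w],t]+[z,w,[x,y,t]]$. A representation is a bilinear $\rho:\otimes^2\mathfrak g\to\mathfrak{gl}(V)$ with $D(x,y):=\rho(y,x)-\rho(x,y)$, satisfying $\rho(z,w)\rho(x,y)-\rho(y,w)\rho(x,z)-\rho(x,[y,z,w])+D(y,z)\rho(x,w)=0$ and $\rho([x,y,z],w)+\rho(z,[x,y,w])=[D(x,y),\rho(z,w)]$. The semidirect product bracket is $\Theta(x+u,y+v,z+w)=[x,y,z]+D(x,y)w+\rho(y,z)u-\rho(x,z)v$ ($x,y,z\in\mathfrak g$, $u,v,w\in V$), a Lie triple system on $\mathfrak g\oplus V$. A relative Rota–Baxter operator is a linear $T:V\to\mathfrak g$ with $[Tu,Tv,Tw]=T(D(Tu,Tv)w+\rho(Tv,Tw)u-\rho(Tu,Tw)v)$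 for all $u,v,w\in V$. Cochains and twisting: $C^p(\mathcal G,\mathcal G)=\mathrm{Hom}(\otimes^{2p+1}\mathcal G,\mathcal G)$, arguments $(\mathfrak X_1,\dots,\mathfrak X_p,x)$ with $\mathfrak X_i=x_i\otimes y_i$; for $P\in C^p,Q\in C^q$, $(P\circ Q)(\mathfrak X_1,\dots,\mathfrak X_{p+q},x)=\sum_{k=1}^p(-1)^{(k-1)q}\sum_{\sigma\in\mathbb S(k-1,q)}(-1)^\sigma P(\mathfrak X_{\sigma(1)},\dots,\mathfrak X_{\sigma(k-1)},Q(\mathfrak X_{\sigma(k)},\dots,\mathfrak X_{\sigma(k+q-1)},x_{k+q})\otimes y_{k+q},\mathfrak X_{k+q+1},\dots,x)+\sum_{k=1}^p(-1)^{(k-1)q}\sum_{\sigma\in\mathbb S(k-1,q)}(-1)^\sigma P(\mathfrak X_{\sigma(1)},\dots,\mathfrak X_{\sigma(k-1)},x_{k+q}\otimes Q(\mathfrak X_{\sigma(k)},\dots,\mathfrak X_{\sigma(k+q-1)},y_{k+q}),\mathfrak X_{k+q+1},\dots,x)+\sum_{\sigma\in\mathbb S(p,q)}(-1)^\sigma P(\mathfrak X_{\sigma(1)},\dots,\mathfrak X_{\sigma(p)},Q(\mathfrak X_{\sigma(p+1)},\dots,\mathfrak X_{\sigma(p+q)},x))$ and $[P,Q]_{\mathsf{LTS}}=P\circ Q-(-1)^{pq}Q\circ P$. With $\hat T\in C^0(\mathfrak g\oplus V,\mathfrak g\oplus V)$, $\hat T(x,u)=(Tu,0)$, and $X_{\hat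 T}(\cdot)=[\cdot,\hat T]_{\mathsf{LTS}}$, the twisting is $\Theta^T=\sum_{k\ge0}\frac1{k!}X_{\hat T}^k(\Theta)$ (finite sum). *)

theory Defs
  imports Main "HOL.Vector_Spaces" "HOL-Library.Product_Plus" "HOL-Combinatorics.Permutations"
begin

definition trilinear ::
  "('k::field \<Rightarrow> 'a::ab_group_add \<Rightarrow> 'a) \<Rightarrow> ('k \<Rightarrow> 'b::ab_group_add \<Rightarrow> 'b) \<Rightarrow>
   ('a \<Rightarrow> 'a \<Rightarrow> 'a \<Rightarrow> 'b) \<Rightarrow> bool" where
  "trilinear sa sb f \<longleftrightarrow>
     (\<forall>y z. Vector_Spaces.linear sa sb (\<lambda>x. f x y z)) \<and>
     (\<forall>x z. Vector_Spaces.linear sa sb (\<lambda>y. f x y z)) \<and>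
     (\<forall>x y. Vector_Spaces.linear sa sb (\<lambda>z. f x y z))"

definition lie_triple_system ::
  "('k::field \<Rightarrow> 'g::ab_group_add \<Rightarrow> 'g) \<Rightarrow> ('g \<Rightarrow> 'g \<Rightarrow> 'g \<Rightarrow> 'g) \<Rightarrow> bool" where
  "lie_triple_system sg br \<longleftrightarrow>
     vector_space sg \<and> trilinear sg sg br \<and>
     (\<forall>x y. br x x y = 0) \<and>
     (\<forall>x y z. br x y z + br y z x + br z x y = 0) \<and>
     (\<forall>x y z w t. br x y (br z w t) =
         br (br x y z) w t + br z (br x y w) t + br z w (br x y t))"

definition repD :: "('g \<Rightarrow> 'g \<Rightarrow> 'v \<Rightarrow> 'v::ab_group_add) \<Rightarrow> 'g \<Rightarrow> 'g \<Rightarrow> 'v \<Rightarrow> 'v" where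
  "repD rho x y = (\<lambda>v. rho y x v - rho x y v)"

definition lts_representation ::
  "('k::field \<Rightarrow> 'g::ab_group_add \<Rightarrow> 'g) \<Rightarrow> ('g \<Rightarrow> 'g \<Rightarrow> 'g \<Rightarrow> 'g) \<Rightarrow>
   ('k \<Rightarrow> 'v::ab_group_add \<Rightarrow> 'v) \<Rightarrow> ('g \<Rightarrow> 'g \<Rightarrow> 'v \<Rightarrow> 'v) \<Rightarrow> bool" where
  "lts_representation sg br sv rho \<longleftrightarrow>
     vector_space sv \<and>
     (\<forall>x y. Vector_Spaces.linear sv sv (rho x y)) \<and>
     (\<forall>y v. Vector_Spaces.linear sg sv (\<lambda>x. rho x y v)) \<and>
     (\<forall>x v. Vector_Spaces.linear sg sv (\<lambda>y. rho x y v)) \<and>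
     (\<forall>x y z w v. rho z w (rho x y v) - rho y w (rho x z v) - rho x (br y z w) v
                   + repD rho y z (rho x w v) = 0) \<and>
     (\<forall>x y z w v. rho (br x y z) w v + rho z (br x y w) v =
                   repD rho x y (rho z w v) - rho z w (repD rho x y v))"

definition relative_RB ::
  "('g \<Rightarrow> 'g \<Rightarrow> 'g \<Rightarrow> 'g) \<Rightarrow> ('g \<Rightarrow> 'g \<Rightarrow> 'v \<Rightarrow> 'v::ab_group_add) \<Rightarrow> ('v \<Rightarrow> 'g) \<Rightarrow> bool" where
  "relative_RB br rho T \<longleftrightarrow>
     (\<forall>u v w. br (T u) (T v) (T w) =
        T (repD rho (T u) (T v) w + rho (T v) (T w) u - rho (T u) (T w) v))"

definition prod_scale :: "('k \<Rightarrow> 'g \<Rightarrow> 'g) \<Rightarrow> ('k \<Rightarrow> 'v \<Rightarrow> 'v) \<Rightarrow> 'k \<Rightarrow> 'g \<times> 'v \<Rightarrow> 'g \<times> 'v" where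
  "prod_scale sg sv c p = (sg c (fst p), sv c (snd p))"

text \<open>Cochains: an element of C^p(G,G) = Hom(tensor^(2p+1) G, G) is represented as a
function taking the list [X_1,...,X_p] of pairs X_i = (x_i,y_i) and the last argument x
(only lists of length p are meaningful).\<close>
type_synonym 'a cochain = "('a \<times> 'a) list \<Rightarrow> 'a \<Rightarrow> 'a"

text \<open>(i,j)-shuffles of {0..<i+j} (0-indexed version of S(i,j)).\<close>
definition shuffles :: "nat \<Rightarrow> nat \<Rightarrow> (nat \<Rightarrow> nat) set" where
  "shuffles i j = {\<sigma>. \<sigma> permutes {0..<i+j} \<and>
      (\<forall>a b. a < b \<and> b < i \<longrightarrow> \<sigma> a < \<sigma> b) \<and>
      (\<forall>a b. i \<le> a \<and> a < b \<and> b < i + j \<longrightarrow> \<sigma> a < \<sigma> b)}"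

text \<open>The composition P \<circ> Q for P in C^p, Q in C^q (formula of the paper, 0-indexed:
X_m is Xs!(m-1)).\<close>
definition lts_circ ::
  "('k::field \<Rightarrow> 'a::ab_group_add \<Rightarrow> 'a) \<Rightarrow> nat \<Rightarrow> nat \<Rightarrow> 'a cochain \<Rightarrow> 'a cochain \<Rightarrow> 'a cochain" where
  "lts_circ s p q P Q = (\<lambda>Xs x.
     (\<Sum>k\<in>{1..p}. s ((-1) ^ ((k - 1) * q))
        (\<Sum>\<sigma>\<in>shuffles (k - 1) q. s (of_int (sign \<sigma>))
           (P (map (\<lambda>i. Xs ! \<sigma> i) [0..<k - 1]
               @ [(Q (map (\<lambda>i. Xs ! \<sigma> i) [k - 1..<k - 1 + q]) (fst (Xs ! (k + q - 1))),
                   snd (Xs ! (k + q - 1)))]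
               @ drop (k + q) Xs) x)))
   + (\<Sum>k\<in>{1..p}. s ((-1) ^ ((k - 1) * q))
        (\<Sum>\<sigma>\<in>shuffles (k - 1) q. s (of_int (sign \<sigma>))
           (P (map (\<lambda>i. Xs ! \<sigma> i) [0..<k - 1]
               @ [(fst (Xs ! (k + q - 1)),
                   Q (map (\<lambda>i. Xs ! \<sigma> i) [k - 1..<k - 1 + q]) (snd (Xs ! (k + q - 1))))]
               @ drop (k + q) Xs) x)))
   + (\<Sum>\<sigma>\<in>shuffles p q. s (of_int (sign \<sigma>))
        (P (map (\<lambda>i. Xs ! \<sigma> i) [0..<p]) (Q (map (\<lambda>i. Xs ! \<sigma> i) [p..<p + q]) x))))"

definition lts_bracket ::
  "('k::field \<Rightarrow> 'a::ab_group_add \<Rightarrow> 'a) \<Rightarrow> nat \<Rightarrow> nat \<Rightarrow> 'a cochain \<Rightarrow> 'a cochain \<Rightarrow> 'a cochain" where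
  "lts_bracket s p q P Q = (\<lambda>Xs x.
     lts_circ s p q P Q Xs x - s ((-1) ^ (p * q)) (lts_circ s q p Q P Xs x))"

definition semidirect_bracket ::
  "('g \<Rightarrow> 'g \<Rightarrow> 'g \<Rightarrow> 'g) \<Rightarrow> ('g \<Rightarrow> 'g \<Rightarrow> 'v \<Rightarrow> 'v::ab_group_add) \<Rightarrow>
   'g \<times> 'v \<Rightarrow> 'g \<times> 'v \<Rightarrow> 'g \<times> 'v \<Rightarrow> 'g \<times> 'v" where
  "semidirect_bracket br rho a b c =
     (br (fst a) (fst b) (fst c),
      repD rho (fst a) (fst b) (snd c) + rho (fst b) (fst c) (snd a) - rho (fst a) (fst c) (snd b))"

definition semidirect_cochain ::
  "('g \<Rightarrow> 'g \<Rightarrow> 'g \<Rightarrow> 'g) \<Rightarrow> ('g \<Rightarrow> 'g \<Rightarrow> 'v \<Rightarrow> 'v::ab_group_add) \<Rightarrow> ('g \<times> 'v) cochain" where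
  "semidirect_cochain br rho = (\<lambda>Xs c. semidirect_bracket br rho (fst (Xs ! 0)) (snd (Xs ! 0)) c)"

definition hatT :: "('v::zero \<Rightarrow> 'g) \<Rightarrow> ('g \<times> 'v) cochain" where
  "hatT T = (\<lambda>Xs a. (T (snd a), 0))"

definition X_hatT :: "('k::field \<Rightarrow> 'g \<times> 'v \<Rightarrow> 'g \<times> 'v) \<Rightarrow> ('v \<Rightarrow> 'g) \<Rightarrow>
    ('g::ab_group_add \<times> 'v::ab_group_add) cochain \<Rightarrow> ('g \<times> 'v) cochain" where
  "X_hatT s T P = lts_bracket s 1 0 P (hatT T)"

text \<open>Twisting Theta^T = sum_k 1/k! X^k(Theta); the sum is finite: it is taken up to the
least N beyond which all X^m(Theta) vanish (on arguments of the correct arity).\<close>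
definition twisting :: "('k::field_char_0 \<Rightarrow> 'g \<times> 'v \<Rightarrow> 'g \<times> 'v) \<Rightarrow> ('v \<Rightarrow> 'g) \<Rightarrow>
    ('g::ab_group_add \<times> 'v::ab_group_add) cochain \<Rightarrow> ('g \<times> 'v) cochain" where
  "twisting s T Th = (\<lambda>Xs x.
     (\<Sum>k < (LEAST N. \<forall>m\<ge>N. \<forall>Ys y. length Ys = 1 \<longrightarrow> (X_hatT s T ^^ m) Th Ys y = 0).
        s (inverse (fact k)) ((X_hatT s T ^^ k) Th Xs x)))"

definition twilled :: "('g::zero \<times> 'v::zero) cochain \<Rightarrow> bool" where
  "twilled B \<longleftrightarrow>
     (\<forall>x y z. snd (B [((x, 0), (y, 0))] (z, 0)) = 0) \<and>
     (\<forall>u v w. fst (B [((0, u), (0, v))] (0, w)) = 0)"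

end

theory Submission
  imports Defs
begin

text \<open>Write \<open>t\<close> for the square-zero endomorphism \<open>(x, u) \<mapsto> (T u, 0)\<close> of \<open>g \<oplus> V\<close>.
On a 1-cochain given by a trilinear map \<open>f\<close>, the operator \<open>X_hatT\<close> acts as
\<open>f \<mapsto> f \<circ> (t \<otimes> 1 \<otimes> 1 + 1 \<otimes> t \<otimes> 1 + 1 \<otimes> 1 \<otimes> t) - t \<circ> f\<close>. Because \<open>t\<^sup>2 = 0\<close>, its
\<open>k\<close>-th power is \<open>k!\<close> times (the terms of \<open>f\<close> with \<open>t\<close> inserted into exactly \<open>k\<close> arguments)
minus \<open>t\<close> applied to the \<open>(k-1)\<close>-fold insertions, and it vanishes for \<open>k \<ge> 5\<close>. Summing the
exponential series shows that twisting is conjugation by \<open>1 + t\<close>: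
\<open>\<Theta>\<^sup>T(a, b, c) = (1 - t) \<Theta>((1 + t) a, (1 + t) b, (1 + t) c)\<close>.
Since \<open>t\<close> kills \<open>g\<close>, the subspace \<open>g\<close> is always closed under \<open>\<Theta>\<^sup>T\<close>. On \<open>V\<close> we have
\<open>(1 + t)(0, u) = (T u, u)\<close>, so the \<open>g\<close>-component of \<open>\<Theta>\<^sup>T((0,u),(0,v),(0,w))\<close> is exactly
\<open>[Tu,Tv,Tw] - T(D(Tu,Tv)w + \<rho>(Tv,Tw)u - \<rho>(Tu,Tw)v)\<close>, the defect of the Rota-Baxter
identity.\<close>

lemma linear_hom_simps:
  assumes "Vector_Spaces.linear s1 s2 f"
  shows "f 0 = 0" "f (x + y) = f x + f y" "f (x - y) = f x - f y" "f (- x) = - f x"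
    "f (s1 c x) = s2 c (f x)"
proof -
  interpret linear s1 s2 f by fact
  show "f 0 = 0" "f (x + y) = f x + f y" "f (x - y) = f x - f y" "f (- x) = - f x"
    "f (s1 c x) = s2 c (f x)" by (simp_all add: add diff neg scale)
qed

lemma trilinear_simps:
  assumes "trilinear s1 s2 f"
  shows "f 0 y z = 0" "f x 0 z = 0" "f x y 0 = 0"
    and "f (x + x') y z = f x y z + f x' y z" "f x (y + y') z = f x y z + f x y' z"
      "f x y (z + z') = f x y z + f x y z'"
    and "f (s1 c x) y z = s2 c (f x y z)" "f x (s1 c y) z = s2 c (f x y z)"
      "f x y (s1 c z) = s2 c (f x y z)"
proof -
  have lin: "Vector_Spaces.linear s1 s2 (\<lambda>x. f x y z)"
    "Vector_Spaces.linear s1 s2 (\<lambda>y. f x y z)" "Vector_Spaces.linear s1 s2 (\<lambda>z. f x y z)"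
    for x y z
    using assms by (simp_all add: trilinear_def)
  show "f 0 y z = 0" "f x 0 z = 0" "f x y 0 = 0"
    "f (x + x') y z = f x y z + f x' y z" "f x (y + y') z = f x y z + f x y' z"
    "f x y (z + z') = f x y z + f x y z'"
    "f (s1 c x) y z = s2 c (f x y z)" "f x (s1 c y) z = s2 c (f x y z)"
    "f x y (s1 c z) = s2 c (f x y z)"
    using linear_hom_simps(1,2,5)[OF lin(1)] linear_hom_simps(1,2,5)[OF lin(2)]
      linear_hom_simps(1,2,5)[OF lin(3)] by simp_all
qed

definition trimap_bracket ::
  "('a::ab_group_add \<Rightarrow> 'a) \<Rightarrow> ('a \<Rightarrow> 'a \<Rightarrow> 'a \<Rightarrow> 'a) \<Rightarrow> 'a \<Rightarrow> 'a \<Rightarrow> 'a \<Rightarrow> 'a" where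
  "trimap_bracket t f = (\<lambda>a b c. f (t a) b c + f a (t b) c + f a b (t c) - t (f a b c))"

fun insertions ::
  "('a::ab_group_add \<Rightarrow> 'a) \<Rightarrow> ('a \<Rightarrow> 'a \<Rightarrow> 'a \<Rightarrow> 'a) \<Rightarrow> nat \<Rightarrow> 'a \<Rightarrow> 'a \<Rightarrow> 'a \<Rightarrow> 'a" where
  "insertions t f 0 a b c = f a b c"
| "insertions t f (Suc 0) a b c = f (t a) b c + f a (t b) c + f a b (t c)"
| "insertions t f (Suc (Suc 0)) a b c = f (t a) (t b) c + f (t a) b (t c) + f a (t b) (t c)"
| "insertions t f (Suc (Suc (Suc 0))) a b c = f (t a) (t b) (t c)"
| "insertions t f (Suc (Suc (Suc (Suc k)))) a b c = 0"

fun twist_component ::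
  "('a::ab_group_add \<Rightarrow> 'a) \<Rightarrow> ('a \<Rightarrow> 'a \<Rightarrow> 'a \<Rightarrow> 'a) \<Rightarrow> nat \<Rightarrow> 'a \<Rightarrow> 'a \<Rightarrow> 'a \<Rightarrow> 'a" where
  "twist_component t f 0 a b c = f a b c"
| "twist_component t f (Suc k) a b c = insertions t f (Suc k) a b c - t (insertions t f k a b c)"

context vector_space
begin

lemma trimap_bracket_scale:
  assumes "Vector_Spaces.linear scale scale t"
  shows "trimap_bracket t (\<lambda>a b c. scale r (g a b c))
    = (\<lambda>a b c. scale r (trimap_bracket t g a b c))"
  by (simp add: trimap_bracket_def linear_hom_simps[OF assms] scale_right_distrib
      scale_right_diff_distrib)

text \<open>Since \<open>t \<circ> t = 0\<close>, inserting \<open>t\<close> into an argument that already carries it, or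
applying \<open>t\<close> to a value of \<open>t\<close>, gives \<open>0\<close>; each term with \<open>t\<close> in \<open>k + 1\<close> arguments
arises from \<open>k + 1\<close> of the \<open>k\<close>-fold insertions.\<close>

lemma trimap_bracket_twist_component:
  assumes t: "Vector_Spaces.linear scale scale t" and tt: "\<And>x. t (t x) = 0"
    and f0: "\<And>y z. f 0 y z = 0" "\<And>x z. f x 0 z = 0" "\<And>x y. f x y 0 = 0"
  shows "trimap_bracket t (twist_component t f k) a b c
    = scale (of_nat (Suc k)) (twist_component t f (Suc k) a b c)"
proof -
  note simps = trimap_bracket_def linear_hom_simps[OF t] tt f0 algebra_simps
  have scale_Suc: "scale (of_nat (Suc n)) x = x + scale (of_nat n) x" for n x
    by (simp add: scale_left_distrib)
  consider "k = 0" | "k = Suc 0" | "k = Suc (Suc 0)" | "k = Suc (Suc (Suc 0))"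
    | n where "k = Suc (Suc (Suc (Suc n)))"
    by (metis not0_implies_Suc)
  then show ?thesis
  proof cases
    case 5 then show ?thesis
      by (cases n) (simp_all only: scale_Suc, simp_all add: simps)
  qed (simp_all only: scale_Suc, simp_all add: simps)
qed

lemma iterate_trimap_bracket:
  assumes t: "Vector_Spaces.linear scale scale t" and tt: "\<And>x. t (t x) = 0"
    and f0: "\<And>y z. f 0 y z = 0" "\<And>x z. f x 0 z = 0" "\<And>x y. f x y 0 = 0"
  shows "(trimap_bracket t ^^ k) f
    = (\<lambda>a b c. scale (of_nat (fact k)) (twist_component t f k a b c))"
proof (induction k)
  case 0
  then show ?case by (simp add: fun_eq_iff)
next
  case (Suc k)
  have "(trimap_bracket t ^^ Suc k) f
      = (\<lambda>a b c. scale (of_nat (fact k)) (trimap_bracket t (twist_component t f k) a b c))"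
    using Suc.IH by (simp add: trimap_bracket_scale[OF t])
  also have "\<dots> = (\<lambda>a b c. scale (of_nat (fact (Suc k))) (twist_component t f (Suc k) a b c))"
    by (simp add: trimap_bracket_twist_component[of t f, OF t tt f0] algebra_simps)
  finally show ?case .
qed

lemma sum_twist_components:
  assumes t: "Vector_Spaces.linear scale scale t" and f: "trilinear scale scale f"
  shows "(\<Sum>k<5. twist_component t f k a b c)
    = f (a + t a) (b + t b) (c + t c) - t (f (a + t a) (b + t b) (c + t c))"
proof -
  have expand: "f (a + t a) (b + t b) (c + t c) = (\<Sum>k<4. insertions t f k a b c)"
    by (simp add: trilinear_simps[OF f] eval_nat_numeral algebra_simps)
  show ?thesis
    unfolding expand by (simp add: eval_nat_numeral linear_hom_simps[OF t] algebra_simps)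
qed

end

lemma exp_trimap_bracket:
  fixes s :: "'k::field_char_0 \<Rightarrow> 'a::ab_group_add \<Rightarrow> 'a"
  assumes s: "vector_space s" and t: "Vector_Spaces.linear s s t" and tt: "\<And>x. t (t x) = 0"
    and f: "trilinear s s f"
  shows "k \<ge> 5 \<Longrightarrow> (trimap_bracket t ^^ k) f a b c = 0"
    and "(\<Sum>k<5. s (inverse (fact k)) ((trimap_bracket t ^^ k) f a b c))
      = f (a + t a) (b + t b) (c + t c) - t (f (a + t a) (b + t b) (c + t c))"
proof -
  interpret vector_space s by (fact s)
  have iterate: "(trimap_bracket t ^^ k) f
      = (\<lambda>a b c. s (of_nat (fact k)) (twist_component t f k a b c))" for k
    by (rule iterate_trimap_bracket[OF t tt]) (simp_all add: trilinear_simps[OF f])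
  show "k \<ge> 5 \<Longrightarrow> (trimap_bracket t ^^ k) f a b c = 0"
    by (auto simp: iterate linear_hom_simps[OF t] eval_nat_numeral dest!: le_Suc_ex)
  have "s (inverse (fact k)) ((trimap_bracket t ^^ k) f a b c) = twist_component t f k a b c"
    for k
    by (simp add: iterate)
  then show "(\<Sum>k<5. s (inverse (fact k)) ((trimap_bracket t ^^ k) f a b c))
      = f (a + t a) (b + t b) (c + t c) - t (f (a + t a) (b + t b) (c + t c))"
    by (simp only: sum_twist_components[OF t f])
qed

definition cochain_of_trimap :: "('a \<Rightarrow> 'a \<Rightarrow> 'a \<Rightarrow> 'a) \<Rightarrow> 'a cochain" where
  "cochain_of_trimap f = (\<lambda>Xs c. f (fst (Xs ! 0)) (snd (Xs ! 0)) c)"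

definition hatT_map :: "('v::zero \<Rightarrow> 'g) \<Rightarrow> 'g \<times> 'v \<Rightarrow> 'g \<times> 'v" where
  "hatT_map T p = (T (snd p), 0)"

lemma X_hatT_cochain_of_trimap:
  assumes "vector_space s"
  shows "X_hatT s T (cochain_of_trimap f) = cochain_of_trimap (trimap_bracket (hatT_map T) f)"
proof -
  interpret vector_space s by fact
  have shuffles_id: "shuffles 0 0 = {id}" "shuffles (Suc 0) 0 = {id}" "shuffles 0 (Suc 0) = {id}"
    by (auto simp: shuffles_def)
  show ?thesis
    by (simp add: X_hatT_def lts_bracket_def lts_circ_def shuffles_id cochain_of_trimap_def
        trimap_bracket_def hatT_def hatT_map_def fun_eq_iff)
qed

lemma iterate_X_hatT_cochain_of_trimap:
  assumes "vector_space s"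
  shows "(X_hatT s T ^^ m) (cochain_of_trimap f)
    = cochain_of_trimap ((trimap_bracket (hatT_map T) ^^ m) f)"
  by (induction m) (simp_all add: X_hatT_cochain_of_trimap[OF assms])

lemma twisting_eq_sum_lessThan:
  fixes s :: "'k::field_char_0 \<Rightarrow> 'g::ab_group_add \<times> 'v::ab_group_add \<Rightarrow> 'g \<times> 'v"
  assumes s: "vector_space s"
    and vanish: "\<And>m Ys y. m \<ge> M \<Longrightarrow> length Ys = 1 \<Longrightarrow> (X_hatT s T ^^ m) Th Ys y = 0"
    and "length Xs = 1"
  shows "twisting s T Th Xs x = (\<Sum>k<M. s (inverse (fact k)) ((X_hatT s T ^^ k) Th Xs x))"
proof -
  interpret vector_space s by (fact s)
  define N where
    "N = (LEAST N. \<forall>m\<ge>N. \<forall>Ys y. length Ys = 1 \<longrightarrow> (X_hatT s T ^^ m) Th Ys y = 0)"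
  have "\<forall>m\<ge>M. \<forall>Ys y. length Ys = 1 \<longrightarrow> (X_hatT s T ^^ m) Th Ys y = 0"
    using vanish by blast
  then have "N \<le> M"
    and vanish_N: "\<forall>m\<ge>N. \<forall>Ys y. length Ys = 1 \<longrightarrow> (X_hatT s T ^^ m) Th Ys y = 0"
    unfolding N_def by (rule Least_le, rule LeastI)
  have beyond_N: "(X_hatT s T ^^ k) Th Xs x = 0" if "N \<le> k" for k
    using vanish_N that \<open>length Xs = 1\<close> by blast
  have "twisting s T Th Xs x = (\<Sum>k<N. s (inverse (fact k)) ((X_hatT s T ^^ k) Th Xs x))"
    unfolding twisting_def N_def ..
  also have "\<dots> = (\<Sum>k<M. s (inverse (fact k)) ((X_hatT s T ^^ k) Th Xs x))"
    using \<open>N \<le> M\<close> by (intro sum.mono_neutral_left) (auto simp: beyond_N)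
  finally show ?thesis .
qed

lemma vector_space_prod_scale:
  assumes "vector_space sg" "vector_space sv"
  shows "vector_space (prod_scale sg sv)"
proof -
  interpret g: vector_space sg by fact
  interpret v: vector_space sv by fact
  show ?thesis
    by unfold_locales (auto simp: prod_scale_def g.scale_right_distrib g.scale_left_distrib
        v.scale_right_distrib v.scale_left_distrib)
qed

lemma linear_hatT_map:
  assumes "vector_space sg" "vector_space sv" "Vector_Spaces.linear sv sg T"
  shows "Vector_Spaces.linear (prod_scale sg sv) (prod_scale sg sv) (hatT_map T)"
proof -
  interpret v: vector_space sv by fact
  show ?thesis
    using assms by (auto simp: linear_iff vector_space_prod_scale hatT_map_def prod_scale_def
        linear_hom_simps[OF assms(3)])
qed

theorem twisting_cochain_of_trimap:
  fixes sg :: "'k::field_char_0 \<Rightarrow> 'g::ab_group_add \<Rightarrow> 'g"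
    and sv :: "'k \<Rightarrow> 'v::ab_group_add \<Rightarrow> 'v"
  assumes sg: "vector_space sg" and sv: "vector_space sv" and T: "Vector_Spaces.linear sv sg T"
    and f: "trilinear (prod_scale sg sv) (prod_scale sg sv) f"
  defines "e \<equiv> \<lambda>p. p + hatT_map T p"
  shows "twisting (prod_scale sg sv) T (cochain_of_trimap f) [(a, b)] c
    = f (e a) (e b) (e c) - hatT_map T (f (e a) (e b) (e c))"
proof -
  note s = vector_space_prod_scale[OF sg sv] and t = linear_hatT_map[OF sg sv T]
  have tt: "hatT_map T (hatT_map T p) = 0" for p
    by (simp add: hatT_map_def linear_hom_simps[OF T] zero_prod_def)
  note exp = exp_trimap_bracket[OF s t tt f]
  have "twisting (prod_scale sg sv) T (cochain_of_trimap f) [(a, b)] c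
      = (\<Sum>k<5. prod_scale sg sv (inverse (fact k))
           ((trimap_bracket (hatT_map T) ^^ k) f a b c))"
    by (subst twisting_eq_sum_lessThan[OF s, where M = 5])
      (simp_all add: iterate_X_hatT_cochain_of_trimap[OF s],
       simp_all add: cochain_of_trimap_def exp(1))
  then show ?thesis
    by (simp only: exp(2) e_def)
qed

lemma trilinear_semidirect_bracket:
  assumes lts: "lie_triple_system sg br" and rep: "lts_representation sg br sv rho"
  shows "trilinear (prod_scale sg sv) (prod_scale sg sv) (semidirect_bracket br rho)"
proof -
  have sg: "vector_space sg" and br: "trilinear sg sg br"
    using lts by (simp_all add: lie_triple_system_def)
  have sv: "vector_space sv"
    and rho_lin: "Vector_Spaces.linear sv sv (rho x y)"
      "Vector_Spaces.linear sg sv (\<lambda>x. rho x y v)" "Vector_Spaces.linear sg sv (\<lambda>y. rho x y v)"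
      for x y v
    using rep by (simp_all add: lts_representation_def)
  interpret v: vector_space sv by (fact sv)
  note lin_simps = linear_hom_simps(2,3,5)[OF rho_lin(1)]
    linear_hom_simps(2,3,5)[OF rho_lin(2), simplified]
    linear_hom_simps(2,3,5)[OF rho_lin(3), simplified] trilinear_simps(4-9)[OF br]
  show ?thesis
    unfolding trilinear_def linear_iff
    by (simp add: vector_space_prod_scale[OF sg sv] sg sv semidirect_bracket_def repD_def
        prod_scale_def lin_simps algebra_simps)
qed

theorem proposition5p14:
  fixes sg :: "'k::field_char_0 \<Rightarrow> 'g::ab_group_add \<Rightarrow> 'g"
    and sv :: "'k \<Rightarrow> 'v::ab_group_add \<Rightarrow> 'v"
    and br :: "'g \<Rightarrow> 'g \<Rightarrow> 'g \<Rightarrow> 'g"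
    and rho :: "'g \<Rightarrow> 'g \<Rightarrow> 'v \<Rightarrow> 'v"
    and T :: "'v \<Rightarrow> 'g"
  assumes "lie_triple_system sg br"
    and "lts_representation sg br sv rho"
    and "Vector_Spaces.linear sv sg T"
  shows "twilled (twisting (prod_scale sg sv) T (semidirect_cochain br rho))
         \<longleftrightarrow> relative_RB br rho T"
proof -
  have sg: "vector_space sg" using assms(1) by (simp add: lie_triple_system_def)
  have sv: "vector_space sv" and rho_lin: "Vector_Spaces.linear sv sv (rho x y)" for x y
    using assms(2) by (simp_all add: lts_representation_def)
  note rho_0 = linear_hom_simps(1)[OF rho_lin]
  have "semidirect_cochain br rho = cochain_of_trimap (semidirect_bracket br rho)"
    by (simp add: semidirect_cochain_def cochain_of_trimap_def fun_eq_iff)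
  note twisting = twisting_cochain_of_trimap[OF sg sv assms(3)
      trilinear_semidirect_bracket[OF assms(1,2)], folded this]
  note simps = twisting hatT_map_def semidirect_bracket_def repD_def rho_0
    linear_hom_simps(1)[OF assms(3)]
  have g_closed: "snd (twisting (prod_scale sg sv) T (semidirect_cochain br rho)
      [((x, 0), (y, 0))] (z, 0)) = 0" for x y z
    by (simp add: simps)
  have V_component: "fst (twisting (prod_scale sg sv) T (semidirect_cochain br rho)
      [((0, u), (0, v))] (0, w))
    = br (T u) (T v) (T w) - T (repD rho (T u) (T v) w + rho (T v) (T w) u - rho (T u) (T w) v)"
    for u v w
    by (simp add: simps)
  show ?thesis
    unfolding twilled_def relative_RB_def g_closed V_component by simp
qed

end
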